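(* If $\phi$ is a Young function and $f:\mathbb{R}^{N}\rightarrow [0,\infty ]$, then $\widehat{\phi(f)}=\phi(\hat{f})$.
   Context: A Young function is a nonconstant $\phi:[0,\infty]\to[0,\infty]$ with $\phi(0)=0$, nondecreasing, convex and left continuous. Enclosing balls: for nonempty bounded $X\subset\mathbb{R}^N$, $\overline{B}_X$ is the unique closed ball of minimal diameter containing $X$; $\overline{B}_X:=\mathbb{R}^N$ if $X$ unbounded; $\overline{B}_\emptyset:=\{0\}$. For $f:\mathbb{R}^N\to[-\infty,\infty]$ and $\xi\in[-\infty,\infty]$, $\rho^+_f(\xi)\in[0,\infty]$ is the radius of $\overline{B}_{\{f>\xi\}}$, $\gamma^+_f(t):=\inf\{\xi:\rho^+_f(\xi)\le t\}$ for $t\in[0,\infty)$, and $\hat f(x):=\gamma^+_f(|x|)$. *)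

theory Defs
  imports "HOL-Analysis.Analysis" "HOL-Library.Extended_Nonnegative_Real"
begin

definition young_function :: "(ennreal \<Rightarrow> ennreal) \<Rightarrow> bool" where
  "young_function \<phi> \<longleftrightarrow>
     (\<exists>x y. \<phi> x \<noteq> \<phi> y) \<and>
     \<phi> 0 = 0 \<and>
     mono \<phi> \<and>
     (\<forall>x y (l::ennreal). l \<le> 1 \<longrightarrow> \<phi> (l * x + (1 - l) * y) \<le> l * \<phi> x + (1 - l) * \<phi> y) \<and>
     (\<forall>x. continuous (at_left x) \<phi>)"

definition enclosing_ball :: "'a::euclidean_space set \<Rightarrow> 'a set" where
  "enclosing_ball X =
     (if X = {} then {0}
      else if \<not> bounded X then UNIV
      else (THE B. (\<exists>c r. B = cball c r) \<and> X \<subseteq> B \<and>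
                   (\<forall>c r. X \<subseteq> cball c r \<longrightarrow> diameter B \<le> diameter (cball c r))))"

definition ball_radius :: "'a::euclidean_space set \<Rightarrow> ereal" where
  "ball_radius B = (if B = UNIV then \<infinity> else ereal (diameter B / 2))"

definition rho_plus :: "('a::euclidean_space \<Rightarrow> ereal) \<Rightarrow> ereal \<Rightarrow> ereal" where
  "rho_plus f \<xi> = ball_radius (enclosing_ball {x. f x > \<xi>})"

definition gamma_plus :: "('a::euclidean_space \<Rightarrow> ereal) \<Rightarrow> real \<Rightarrow> ereal" where
  "gamma_plus f t = Inf {\<xi>. rho_plus f \<xi> \<le> ereal t}"

definition sym_hat :: "('a::euclidean_space \<Rightarrow> ereal) \<Rightarrow> 'a \<Rightarrow> ereal" where
  "sym_hat f x = gamma_plus f (norm x)"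

end

theory Submission
  imports Defs
begin

text \<open>Put \<open>a(\<eta>) = sup {s. \<phi> s \<le> \<eta>}\<close>. As \<open>\<phi>\<close> is nondecreasing, left continuous and
  \<open>\<phi> 0 = 0\<close>, \<open>\<phi> s \<le> \<eta>\<close> holds exactly when \<open>s \<le> a(\<eta>)\<close>, so the superlevel set
  \<open>{\<phi> \<circ> f > \<eta>}\<close> is \<open>{f > a(\<eta>)}\<close>. On the other hand \<open>\<gamma>\<^sup>+(F)(t) \<le> \<xi>\<close> holds exactly when
  \<open>{F > \<xi>}\<close> fits into a closed ball of radius \<open>t\<close>: the infimum defining \<open>\<gamma>\<^sup>+\<close> is attained,
  because the sets of admissible centres for the levels above it form a chain of nonempty
  compact sets. Hence \<open>\<gamma>\<^sup>+(\<phi> \<circ> f)(t) \<le> \<eta>\<close> iff \<open>\<gamma>\<^sup>+(f)(t) \<le> a(\<eta>)\<close> iff \<open>\<phi>(\<gamma>\<^sup>+(f)(t)) \<le> \<eta>\<close>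
  for every \<open>\<eta> \<ge> 0\<close>.\<close>

lemma norm_half_sum_sq:
  fixes u v :: "'a::real_inner"
  shows "norm ((1/2) *\<^sub>R (u + v))^2 = (norm u^2 + norm v^2) / 2 - norm (v - u)^2 / 4"
  by (simp add: power2_norm_eq_inner inner_add_left inner_add_right inner_diff_left
      inner_diff_right inner_commute field_simps)

lemma norm_diff_midpoint_sq:
  fixes a b x :: "'a::real_inner"
  shows "norm (x - midpoint a b)^2 = (norm (x - a)^2 + norm (x - b)^2) / 2 - (dist a b)^2 / 4"
proof -
  have "(1/2) *\<^sub>R x + (1/2) *\<^sub>R x = x"
    by (simp flip: scaleR_add_left)
  then have "x - midpoint a b = (1/2) *\<^sub>R ((x - a) + (x - b))"
    by (simp add: midpoint_def algebra_simps)
  moreover have "dist a b = norm ((x - b) - (x - a))"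
    by (simp add: dist_norm)
  ultimately show ?thesis
    by (simp only: norm_half_sum_sq)
qed

lemma radius_nonneg_if_subset_cball:
  fixes c :: "'a::metric_space"
  shows "x \<in> X \<Longrightarrow> X \<subseteq> cball c r \<Longrightarrow> 0 \<le> r"
  by (metis cball_eq_empty empty_iff not_le subsetD)

definition cball_centers :: "'a::metric_space set \<Rightarrow> real \<Rightarrow> 'a set" where
  "cball_centers X r = {c. X \<subseteq> cball c r}"

lemma closed_cball_centers: "closed (cball_centers X r)"
proof -
  have "cball_centers X r = (\<Inter>x\<in>X. cball x r)"
    by (auto simp: cball_centers_def dist_commute)
  then show ?thesis by auto
qed

lemma bounded_cball_centers: "x \<in> X \<Longrightarrow> bounded (cball_centers X r)"
  by (rule bounded_subset[OF bounded_cball[of x r]]) (auto simp: cball_centers_def dist_commute)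

lemma common_cball_center:
  fixes X :: "'i::linorder \<Rightarrow> 'a::euclidean_space set"
  assumes mono: "\<And>i j. i \<in> I \<Longrightarrow> j \<in> I \<Longrightarrow> i \<le> j \<Longrightarrow> cball_centers (X i) (r i) \<subseteq> cball_centers (X j) (r j)"
    and nonempty: "\<And>i. i \<in> I \<Longrightarrow> cball_centers (X i) (r i) \<noteq> {}"
    and "k \<in> I" "y \<in> X k"
  shows "\<exists>c. \<forall>i\<in>I. X i \<subseteq> cball c (r i)"
proof -
  have "\<Inter>((\<lambda>i. cball_centers (X i) (r i)) ` I) \<noteq> {}"
  proof (rule bounded_closed_chain)
    show "cball_centers (X k) (r k) \<in> (\<lambda>i. cball_centers (X i) (r i)) ` I"
      using \<open>k \<in> I\<close> by blast
    show "bounded (cball_centers (X k) (r k))"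
      using \<open>y \<in> X k\<close> by (rule bounded_cball_centers)
    show "closed S" if "S \<in> (\<lambda>i. cball_centers (X i) (r i)) ` I" for S
      using that closed_cball_centers by blast
    show "{} \<notin> (\<lambda>i. cball_centers (X i) (r i)) ` I"
      using nonempty by blast
    show "S \<subseteq> T \<or> T \<subseteq> S"
      if "S \<in> (\<lambda>i. cball_centers (X i) (r i)) ` I \<and> T \<in> (\<lambda>i. cball_centers (X i) (r i)) ` I" for S T
    proof -
      from that obtain i j where "i \<in> I" "j \<in> I" "S = cball_centers (X i) (r i)" "T = cball_centers (X j) (r j)"
        by blast
      then show ?thesis
        using mono[of i j] mono[of j i] le_cases[of i j] by blast
    qed
  qed
  then show ?thesis by (auto simp: cball_centers_def)
qed

lemma ex_min_enclosing_cball: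
  fixes X :: "'a::euclidean_space set"
  assumes "x0 \<in> X" "bounded X"
  obtains c r where "X \<subseteq> cball c r" "\<And>c' r'. X \<subseteq> cball c' r' \<Longrightarrow> r \<le> r'"
proof -
  define R where "R = {r. cball_centers X r \<noteq> {}}"
  define r where "r = Inf R"
  have "R \<noteq> {}"
    using assms(2) by (auto simp: R_def cball_centers_def bounded_subset_cball)
  have "bdd_below R"
    using assms(1) radius_nonneg_if_subset_cball
    by (intro bdd_belowI[of R 0]) (auto simp: R_def cball_centers_def)
  have minimal: "r \<le> r'" if "X \<subseteq> cball c' r'" for c' r'
    using that \<open>bdd_below R\<close> by (auto simp: r_def R_def cball_centers_def intro!: cInf_lower)
  have "cball_centers X r' \<noteq> {}" if "r < r'" for r'
  proof -
    obtain r'' where "r'' \<in> R" "r'' < r'"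
      using \<open>r < r'\<close> cInf_less_iff[OF \<open>R \<noteq> {}\<close> \<open>bdd_below R\<close>] by (auto simp: r_def)
    then show ?thesis
      using subset_cball[of r'' r'] by (fastforce simp: R_def cball_centers_def)
  qed
  moreover have "cball_centers X r' \<subseteq> cball_centers X r''" if "r' \<le> r''" for r' r''
    using that subset_cball[of r' r''] by (auto simp: cball_centers_def)
  ultimately obtain c where c: "\<forall>r'\<in>{r<..}. X \<subseteq> cball c r'"
    using common_cball_center[of "{r<..}" "\<lambda>_. X" "\<lambda>r'. r'" "r + 1" x0] assms(1) by auto
  have "X \<subseteq> cball c r"
  proof
    fix x assume "x \<in> X"
    have "dist c x \<le> r'" if "r < r'" for r'
      using c \<open>x \<in> X\<close> that by fastforce
    then have "dist c x \<le> r" by (rule dense_ge)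
    then show "x \<in> cball c r" by simp
  qed
  with minimal show ?thesis using that by blast
qed

lemma min_enclosing_cball_unique:
  fixes X :: "'a::euclidean_space set"
  assumes "x0 \<in> X" "X \<subseteq> cball c1 r" "X \<subseteq> cball c2 r"
    and minimal: "\<And>c r'. X \<subseteq> cball c r' \<Longrightarrow> r \<le> r'"
  shows "c1 = c2"
proof (rule ccontr)
  assume "c1 \<noteq> c2"
  \<comment> \<open>then \<open>X\<close> fits into a strictly smaller ball around the midpoint of the two centres\<close>
  define r' where "r' = sqrt (r^2 - (dist c1 c2)^2 / 4)"
  have close: "norm (x - midpoint c1 c2)^2 \<le> r^2 - (dist c1 c2)^2 / 4" if "x \<in> X" for x
  proof -
    have "norm (x - c1) \<le> r" "norm (x - c2) \<le> r"
      using that assms(2,3) by (auto simp: dist_norm norm_minus_commute)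
    then have "norm (x - c1)^2 \<le> r^2" "norm (x - c2)^2 \<le> r^2"
      by (simp_all add: power_mono)
    then show ?thesis by (simp add: norm_diff_midpoint_sq)
  qed
  have "X \<subseteq> cball (midpoint c1 c2) r'"
    using close real_le_rsqrt by (fastforce simp: r'_def dist_norm norm_minus_commute)
  then have "r \<le> r'" by (rule minimal)
  moreover have "0 \<le> r"
    using assms(1,2) by (rule radius_nonneg_if_subset_cball)
  ultimately have "r^2 \<le> r'^2"
    by (rule power_mono)
  moreover have "0 \<le> r^2 - (dist c1 c2)^2 / 4"
    using close[OF assms(1)] zero_le_power2[of "norm (x0 - midpoint c1 c2)"] by linarith
  ultimately have "r^2 \<le> r^2 - (dist c1 c2)^2 / 4"
    by (simp add: r'_def)
  with \<open>c1 \<noteq> c2\<close> show False by simp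
qed

lemma enclosing_ball_eq_cball:
  fixes X :: "'a::euclidean_space set"
  assumes "x0 \<in> X" "bounded X" "X \<subseteq> cball c r"
    and minimal: "\<And>c' r'. X \<subseteq> cball c' r' \<Longrightarrow> r \<le> r'"
  shows "enclosing_ball X = cball c r"
proof -
  let ?P = "\<lambda>B. (\<exists>c r. B = cball c r) \<and> X \<subseteq> B \<and>
                 (\<forall>c r. X \<subseteq> cball c r \<longrightarrow> diameter B \<le> diameter (cball c r))"
  have "0 \<le> r"
    using assms(1,3) by (rule radius_nonneg_if_subset_cball)
  have "diameter (cball c r) \<le> diameter (cball c' r')" if "X \<subseteq> cball c' r'" for c' r'
    using minimal[OF that] \<open>0 \<le> r\<close> by simp
  with assms(3) have "?P (cball c r)" by blast
  moreover have "B = cball c r" if "?P B" for B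
  proof -
    from that obtain c' r' where B: "B = cball c' r'" by blast
    with that assms(3) have sub: "X \<subseteq> cball c' r'"
      and diam: "diameter (cball c' r') \<le> diameter (cball c r)" by auto
    have "0 \<le> r'"
      using assms(1) sub by (rule radius_nonneg_if_subset_cball)
    with diam \<open>0 \<le> r\<close> have "r' \<le> r" by simp
    with minimal[OF sub] have "r' = r" by simp
    with sub have "X \<subseteq> cball c' r" by simp
    then have "c' = c"
      by (rule min_enclosing_cball_unique[OF assms(1) _ assms(3) minimal])
    with B \<open>r' = r\<close> show ?thesis by simp
  qed
  ultimately have "(THE B. ?P B) = cball c r"
    by (rule the_equality)
  moreover have "X \<noteq> {}"
    using assms(1) by blast
  then have "enclosing_ball X = (THE B. ?P B)"
    unfolding enclosing_ball_def by (rule trans[OF if_not_P if_not_P]) (use assms(2) in blast)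
  ultimately show ?thesis by simp
qed

lemma ball_radius_enclosing_ball_le_iff:
  fixes X :: "'a::euclidean_space set"
  assumes "0 \<le> t"
  shows "ball_radius (enclosing_ball X) \<le> ereal t \<longleftrightarrow> (\<exists>c. X \<subseteq> cball c t)"
proof (cases "X = {}")
  case True
  have "{0::'a} \<noteq> UNIV"
    using nonzero_Basis[OF SOME_Basis] by blast
  with True assms show ?thesis by (simp add: ball_radius_def enclosing_ball_def)
next
  case False
  then obtain x0 where "x0 \<in> X" by blast
  show ?thesis
  proof (cases "bounded X")
    case False
    then show ?thesis
      using \<open>x0 \<in> X\<close> bounded_subset[OF bounded_cball]
      by (auto simp: ball_radius_def enclosing_ball_def)
  next
    case True
    obtain c r where "X \<subseteq> cball c r" and minimal: "\<And>c' r'. X \<subseteq> cball c' r' \<Longrightarrow> r \<le> r'"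
      using ex_min_enclosing_cball[OF \<open>x0 \<in> X\<close> True] by blast
    moreover have "0 \<le> r"
      using \<open>x0 \<in> X\<close> \<open>X \<subseteq> cball c r\<close> by (rule radius_nonneg_if_subset_cball)
    moreover have "cball c r \<noteq> UNIV"
      using bounded_cball not_bounded_UNIV by metis
    ultimately have radius: "ball_radius (enclosing_ball X) = ereal r"
      using enclosing_ball_eq_cball[OF \<open>x0 \<in> X\<close> True] by (simp add: ball_radius_def)
    show ?thesis
    proof
      assume "ball_radius (enclosing_ball X) \<le> ereal t"
      with radius have "r \<le> t" by simp
      then show "\<exists>c. X \<subseteq> cball c t"
        using \<open>X \<subseteq> cball c r\<close> subset_cball[of r t c] by blast
    next
      assume "\<exists>c. X \<subseteq> cball c t"
      with radius minimal show "ball_radius (enclosing_ball X) \<le> ereal t" by auto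
    qed
  qed
qed

lemma gamma_plus_le_iff:
  fixes F :: "'a::euclidean_space \<Rightarrow> ereal"
  assumes "0 \<le> t"
  shows "gamma_plus F t \<le> \<xi> \<longleftrightarrow> (\<exists>c. {x. \<xi> < F x} \<subseteq> cball c t)"
proof -
  define S where "S = {\<xi>. \<exists>c. {x. \<xi> < F x} \<subseteq> cball c t}"
  have gamma: "gamma_plus F t = Inf S"
    by (simp add: gamma_plus_def rho_plus_def S_def ball_radius_enclosing_ball_le_iff[OF assms])
  have upward: "\<xi>' \<in> S" if "\<xi> \<in> S" "\<xi> \<le> \<xi>'" for \<xi> \<xi>'
    using that by (fastforce simp: S_def)
  have above_Inf: "\<xi> \<in> S" if "Inf S < \<xi>" for \<xi>
    using that upward by (auto simp: Inf_less_iff less_imp_le)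
  have "Inf S \<in> S"
  proof (cases "\<exists>y. Inf S < F y")
    case False
    then show ?thesis by (auto simp: S_def)
  next
    case True
    then obtain y \<xi>0 where "Inf S < \<xi>0" "\<xi>0 < F y"
      using dense by blast
    have "cball_centers {x. \<xi> < F x} t \<subseteq> cball_centers {x. \<xi>' < F x} t" if "\<xi> \<le> \<xi>'" for \<xi> \<xi>'
      using that by (auto simp: cball_centers_def)
    moreover have "cball_centers {x. \<xi> < F x} t \<noteq> {}" if "Inf S < \<xi>" for \<xi>
      using above_Inf[OF that] by (auto simp: S_def cball_centers_def)
    ultimately obtain c where c: "\<forall>\<xi>\<in>{Inf S<..}. {x. \<xi> < F x} \<subseteq> cball c t"
      using common_cball_center[of "{Inf S<..}" "\<lambda>\<xi>. {x. \<xi> < F x}" "\<lambda>_. t" \<xi>0 y]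
        \<open>Inf S < \<xi>0\<close> \<open>\<xi>0 < F y\<close> by auto
    have "{x. Inf S < F x} \<subseteq> cball c t"
    proof
      fix x assume "x \<in> {x. Inf S < F x}"
      then obtain \<xi> where "Inf S < \<xi>" "\<xi> < F x"
        using dense by auto
      with c have "{x. \<xi> < F x} \<subseteq> cball c t" by simp
      with \<open>\<xi> < F x\<close> show "x \<in> cball c t" by blast
    qed
    then show ?thesis by (auto simp: S_def)
  qed
  then have "Inf S \<le> \<xi> \<longleftrightarrow> \<xi> \<in> S"
    using upward Inf_lower by blast
  then show ?thesis
    by (simp add: gamma S_def)
qed

lemma gamma_plus_nonneg:
  fixes F :: "'a::euclidean_space \<Rightarrow> ereal"
  assumes "\<And>x. 0 \<le> F x" "0 \<le> t"
  shows "0 \<le> gamma_plus F t"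
proof (rule ccontr)
  assume "\<not> 0 \<le> gamma_plus F t"
  then have "{x. gamma_plus F t < F x} = UNIV"
    using assms(1) by (auto simp: not_le intro: less_le_trans)
  moreover obtain c where "{x. gamma_plus F t < F x} \<subseteq> cball c t"
    using gamma_plus_le_iff[OF assms(2)] by blast
  ultimately have "UNIV \<subseteq> cball c t" by simp
  then have "bounded (UNIV :: 'a set)"
    by (rule bounded_subset[OF bounded_cball])
  then show False by simp
qed

lemma mono_left_continuous_le_iff_le_Sup:
  fixes \<phi> :: "'a::{complete_linorder, linorder_topology} \<Rightarrow> 'b::{complete_linorder, linorder_topology}"
  assumes "mono \<phi>" "\<And>x. continuous (at_left x) \<phi>" "\<phi> bot \<le> e"
  shows "\<phi> s \<le> e \<longleftrightarrow> s \<le> Sup {s. \<phi> s \<le> e}"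
proof
  assume "s \<le> Sup {s. \<phi> s \<le> e}"
  then have "\<phi> s \<le> \<phi> (Sup {s. \<phi> s \<le> e})"
    by (rule monoD[OF \<open>mono \<phi>\<close>])
  also have "\<dots> = (SUP s\<in>{s. \<phi> s \<le> e}. \<phi> s)"
    using assms by (intro continuous_at_Sup_mono) auto
  also have "\<dots> \<le> e"
    by (rule SUP_least) simp
  finally show "\<phi> s \<le> e" .
qed (rule Sup_upper, simp)

lemma gamma_plus_comp:
  fixes \<phi> :: "ennreal \<Rightarrow> ennreal" and F :: "'a::euclidean_space \<Rightarrow> ennreal"
  assumes "mono \<phi>" "\<phi> 0 = 0" "\<And>s. continuous (at_left s) \<phi>" "0 \<le> t"
  shows "gamma_plus (\<lambda>y. enn2ereal (\<phi> (F y))) t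
           = enn2ereal (\<phi> (e2ennreal (gamma_plus (\<lambda>y. enn2ereal (F y)) t)))"
proof -
  have sublevel: "\<phi> s \<le> e \<longleftrightarrow> s \<le> Sup {s. \<phi> s \<le> e}" for s e
    using assms(1-3) by (intro mono_left_continuous_le_iff_le_Sup) (auto simp: bot_ennreal)
  define g where "g = gamma_plus (\<lambda>y. enn2ereal (F y)) t"
  define h where "h = gamma_plus (\<lambda>y. enn2ereal (\<phi> (F y))) t"
  have "0 \<le> g" "0 \<le> h"
    unfolding g_def h_def using \<open>0 \<le> t\<close> by (auto intro: gamma_plus_nonneg)
  have level_iff: "h \<le> enn2ereal e \<longleftrightarrow> \<phi> (e2ennreal g) \<le> e" for e
  proof -
    define a where "a = Sup {s. \<phi> s \<le> e}"
    have "enn2ereal e < enn2ereal (\<phi> z) \<longleftrightarrow> enn2ereal a < enn2ereal z" for z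
      unfolding not_le[symmetric] less_eq_ennreal.rep_eq[symmetric] a_def using sublevel by blast
    then have "h \<le> enn2ereal e \<longleftrightarrow> g \<le> enn2ereal a"
      unfolding g_def h_def gamma_plus_le_iff[OF \<open>0 \<le> t\<close>] by simp
    also have "\<dots> \<longleftrightarrow> e2ennreal g \<le> a"
      by (simp add: less_eq_ennreal.rep_eq enn2ereal_e2ennreal[OF \<open>0 \<le> g\<close>])
    also have "\<dots> \<longleftrightarrow> \<phi> (e2ennreal g) \<le> e"
      unfolding a_def by (rule sublevel[symmetric])
    finally show ?thesis .
  qed
  have "h \<le> enn2ereal (\<phi> (e2ennreal g))"
    using level_iff by simp
  moreover have "\<phi> (e2ennreal g) \<le> e2ennreal h"
    using level_iff[of "e2ennreal h"] by (simp add: enn2ereal_e2ennreal[OF \<open>0 \<le> h\<close>])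
  then have "enn2ereal (\<phi> (e2ennreal g)) \<le> h"
    by (simp add: less_eq_ennreal.rep_eq enn2ereal_e2ennreal[OF \<open>0 \<le> h\<close>])
  ultimately show ?thesis
    unfolding g_def h_def by (rule antisym)
qed

theorem lemma16:
  fixes \<phi> :: "ennreal \<Rightarrow> ennreal" and f :: "'a::euclidean_space \<Rightarrow> ennreal"
  assumes "young_function \<phi>"
  shows "sym_hat (\<lambda>x. enn2ereal (\<phi> (f x)))
           = (\<lambda>x. enn2ereal (\<phi> (e2ennreal (sym_hat (\<lambda>y. enn2ereal (f y)) x))))"
proof
  fix x :: 'a
  have "mono \<phi>" "\<phi> 0 = 0" "\<And>s. continuous (at_left s) \<phi>"
    using assms by (auto simp: young_function_def)
  then show "sym_hat (\<lambda>x. enn2ereal (\<phi> (f x))) x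
           = enn2ereal (\<phi> (e2ennreal (sym_hat (\<lambda>y. enn2ereal (f y)) x)))"
    unfolding sym_hat_def by (rule gamma_plus_comp) simp
qed

end
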